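(* Let $\mathcal{F}$ be a set of probability distributions on $\Theta$, and suppose there exist $\epsilon_n>0$ and $\rho_n\in\mathcal{F}$ such that (i) $\int \mathcal{K}(P^{(n)}_{\theta_0},P^{(n)}_{\theta})\,\rho_n(d\theta)=\int \mathrm{E}[r_n(\theta,\theta_0)]\,\rho_n(d\theta)\le n\epsilon_n$; (ii) $\int \mathrm{Var}(r_n(\theta,\theta_0))\,\rho_n(d\theta)\le n\epsilon_n$; (iii) $\mathcal{K}(\rho_n,\pi)\le n\epsilon_n$. Then for every $\alpha\in(0,1)$ and every $(\epsilon,\eta)\in(0,1)\times(0,1)$, $$P^{(n)}_{\theta_0}\Big[\int D_{\alpha}(P^{(n)}_{\theta},P^{(n)}_{\theta_0})\,\tilde{\pi}_{n,\alpha|X^n}(d\theta)\le \frac{(\alpha+1)n\epsilon_n+\alpha\sqrt{n\epsilon_n/\eta}-\log\epsilon}{1-\alpha}\Big]\ge 1-\epsilon-\eta.$$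
   Context: $\Theta\subseteq\mathbb{R}^d$. For each $\theta\in\Theta$ and $n\ge1$, $P^{(n)}_\theta$ is a probability distribution of $X^n=(X_0,\dots,X_n)$ with density $p^{(n)}_\theta$ with respect to a common dominating measure; the data are distributed as $P^{(n)}_{\theta_0}$, and $\mathrm{E},\mathrm{Var},P$ are taken under $P^{(n)}_{\theta_0}$. $r_n(\theta,\theta_0):=\log\big(p^{(n)}_{\theta_0}(X^n)/p^{(n)}_{\theta}(X^n)\big)$. For $\alpha\in(0,1)$, $D_{\alpha}(P^{(n)}_{\theta},P^{(n)}_{\theta_0}):=\frac{1}{\alpha-1}\log\int \exp(-\alpha r_n(\theta,\theta_0)(x))\,p^{(n)}_{\theta_0}(x)\,dx$ ($\alpha$-Rényi divergence); $\mathcal{K}$ denotes Kullback–Leibler divergence. $\pi$ is a prior on $\Theta$. The fractional (tempered) posterior is $\pi_{n,\alpha|X^n}(d\theta)=e^{-\alpha r_n(\theta,\theta_0)}\pi(d\theta)/\int e^{-\alpha r_n(\gamma,\theta_0)}\pi(d\gamma)$, and its variational approximation is $\tilde\pi_{n,\alpha|X^n}:=\arg\min_{\rho\in\mathcal{F}}\mathcal{K}(\rho,\pi_{n,\alpha|X^n})$, equivalently a minimizer over $\rho\in\mathcal{F}$ of $\alpha\int r_n(\theta,\theta_0)\rho(d\theta)+\mathcal{K}(\rho,\pi)$; it is assumed to exist (elements of $\mathcal F$ are absolutely continuous with respect to $\pi$). *)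

theory Defs
  imports "HOL-Probability.Probability"
begin

text \<open>Extended-valued Kullback-Leibler divergence KL(Q, M) = integral of ln(dQ/dM) w.r.t. Q,
  equal to infinity when Q is not absolutely continuous w.r.t. M or the log-density is not
  Q-integrable (its negative part is always integrable, so this is exactly divergence to infinity).\<close>
definition kl_div :: "'a measure \<Rightarrow> 'a measure \<Rightarrow> ennreal" where
  "kl_div Q M =
     (if sets Q = sets M \<and> absolutely_continuous M Q
         \<and> integrable Q (\<lambda>x. ln (enn2real (RN_deriv M Q x)))
      then ennreal (KL_divergence (exp 1) M Q) else \<infinity>)"

definition llr :: "('p \<Rightarrow> 'x \<Rightarrow> real) \<Rightarrow> 'p \<Rightarrow> 'p \<Rightarrow> 'x \<Rightarrow> real" where
  "llr p \<theta> \<theta>0 x = ln (p \<theta>0 x / p \<theta> x)"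

text \<open>alpha-Renyi divergence D_alpha(P_theta, P_theta0) = 1/(alpha-1) log of the integral of
  exp(-alpha r) p_theta0 d mu, where exp(-alpha r) p_theta0 = p_theta^alpha p_theta0^(1-alpha)
  (with exp(-infinity) = 0); the value is infinity when that integral is 0.\<close>
definition renyi_div :: "'x measure \<Rightarrow> real \<Rightarrow> ('x \<Rightarrow> real) \<Rightarrow> ('x \<Rightarrow> real) \<Rightarrow> ennreal" where
  "renyi_div \<mu> \<alpha> p q =
     (let I = (\<integral>\<^sup>+ x. ennreal (p x powr \<alpha> * q x powr (1 - \<alpha>)) \<partial>\<mu>)
      in if I = 0 then \<infinity> else ennreal (ln (enn2real I) / (\<alpha> - 1)))"

text \<open>Fractional (tempered) posterior given data x:
  density exp(-alpha r_n(theta,theta0)(x)) = (p_theta(x)/p_theta0(x))^alpha w.r.t. the prior, normalised.\<close>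
definition frac_post ::
  "'p measure \<Rightarrow> ('p \<Rightarrow> 'x \<Rightarrow> real) \<Rightarrow> 'p \<Rightarrow> real \<Rightarrow> 'x \<Rightarrow> 'p measure" where
  "frac_post \<pi> p \<theta>0 \<alpha> x =
     density \<pi> (\<lambda>\<theta>. ennreal ((p \<theta> x / p \<theta>0 x) powr \<alpha>) /
                   (\<integral>\<^sup>+ \<gamma>. ennreal ((p \<gamma> x / p \<theta>0 x) powr \<alpha>) \<partial>\<pi>))"

end

theory Submission
  imports Defs
begin

(*
  Fix a sample x and put w(theta) = (p_theta(x) / p_theta0(x))^alpha, so that the tempered
  posterior is the Gibbs measure proportional to w pi.  With the Renyi affinity
  A(theta) = integral of p_theta^alpha p_theta0^(1-alpha) and g = 1/A we have
  D_alpha = ln g / (1 - alpha).  The Donsker-Varadhan inequality and the optimality of the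
  variational approximation Q give
    integral ln g dQ <= KL(Q, post) + ln integral g dpost
                     <= KL(rho_n, pi) + alpha integral r_n drho_n + ln integral w g dpi.
  Since the expectation of w(theta) under p_theta0 is A(theta), Fubini gives
  E integral w g dpi <= 1, so by Markov the last term is at most -ln epsilon off an event of
  probability epsilon; Cauchy-Schwarz and Markov applied to condition (ii) bound
  integral r_n drho_n by n epsilon_n + sqrt(n epsilon_n / eta) off an event of probability eta.
*)

lemma powr_mult_powr_le_convex_comb:
  fixes a b \<alpha> :: real
  assumes "0 \<le> a" "0 \<le> b" "0 < \<alpha>" "\<alpha> < 1"
  shows "a powr \<alpha> * b powr (1 - \<alpha>) \<le> \<alpha> * a + (1 - \<alpha>) * b"
proof (cases "a = 0 \<or> b = 0")
  case True then show ?thesis using assms by auto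
next
  case False then show ?thesis using assms by (intro Youngs_inequality_0) auto
qed

definition renyi_affinity :: "'x measure \<Rightarrow> real \<Rightarrow> ('x \<Rightarrow> real) \<Rightarrow> ('x \<Rightarrow> real) \<Rightarrow> ennreal" where
  "renyi_affinity \<mu> \<alpha> p q = (\<integral>\<^sup>+ x. ennreal (p x powr \<alpha> * q x powr (1 - \<alpha>)) \<partial>\<mu>)"

lemma renyi_affinity_le_1:
  assumes \<alpha>: "0 < \<alpha>" "\<alpha> < 1"
    and [measurable]: "p \<in> borel_measurable \<mu>" "q \<in> borel_measurable \<mu>"
    and nonneg: "\<And>x. x \<in> space \<mu> \<Longrightarrow> 0 \<le> p x" "\<And>x. x \<in> space \<mu> \<Longrightarrow> 0 \<le> q x"
    and dens: "(\<integral>\<^sup>+ x. ennreal (p x) \<partial>\<mu>) = 1" "(\<integral>\<^sup>+ x. ennreal (q x) \<partial>\<mu>) = 1"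
  shows "renyi_affinity \<mu> \<alpha> p q \<le> 1"
proof -
  have "renyi_affinity \<mu> \<alpha> p q \<le> (\<integral>\<^sup>+ x. ennreal \<alpha> * ennreal (p x) + ennreal (1 - \<alpha>) * ennreal (q x) \<partial>\<mu>)"
    unfolding renyi_affinity_def
    using \<alpha> nonneg powr_mult_powr_le_convex_comb[OF nonneg, of _ _ \<alpha>]
    by (intro nn_integral_mono) (simp flip: ennreal_mult ennreal_plus)
  also have "\<dots> = ennreal \<alpha> * (\<integral>\<^sup>+ x. ennreal (p x) \<partial>\<mu>) + ennreal (1 - \<alpha>) * (\<integral>\<^sup>+ x. ennreal (q x) \<partial>\<mu>)"
    by (simp add: nn_integral_add nn_integral_cmult)
  also have "\<dots> = 1"
    using \<alpha> by (simp add: dens flip: ennreal_plus)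
  finally show ?thesis .
qed

lemma nn_integral_density_ratio_powr:
  assumes \<alpha>: "0 < \<alpha>" and [measurable]: "p \<in> borel_measurable \<mu>" "q \<in> borel_measurable \<mu>"
    and nonneg: "\<And>x. x \<in> space \<mu> \<Longrightarrow> 0 \<le> p x" "\<And>x. x \<in> space \<mu> \<Longrightarrow> 0 \<le> q x"
  shows "(\<integral>\<^sup>+ x. ennreal ((p x / q x) powr \<alpha>) \<partial>density \<mu> q) = renyi_affinity \<mu> \<alpha> p q"
  unfolding renyi_affinity_def
proof (subst nn_integral_density, simp_all, intro nn_integral_cong)
  fix x assume x: "x \<in> space \<mu>"
  show "ennreal (q x) * ennreal ((p x / q x) powr \<alpha>) = ennreal (p x powr \<alpha> * q x powr (1 - \<alpha>))"
  proof (cases "q x = 0")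
    case False
    then have "q x * (p x / q x) powr \<alpha> = p x powr \<alpha> * q x powr (1 - \<alpha>)"
      using nonneg[OF x] by (simp add: powr_divide powr_diff)
    then show ?thesis using nonneg[OF x] by (simp flip: ennreal_mult)
  qed (use \<alpha> in simp)
qed

text \<open>At affinity 0 the Renyi divergence is infinite and the value 1 is a placeholder; such
  parameters carry no mass under the tempered posterior.\<close>
definition inverse_affinity :: "ennreal \<Rightarrow> real" where
  "inverse_affinity A = (if A = 0 then 1 else 1 / enn2real A)"

lemma borel_measurable_inverse_affinity [measurable]:
  assumes [measurable]: "f \<in> borel_measurable M"
  shows "(\<lambda>x. inverse_affinity (f x)) \<in> borel_measurable M"
  unfolding inverse_affinity_def by measurable

lemma inverse_affinity_ge_1: "A \<le> 1 \<Longrightarrow> 1 \<le> inverse_affinity A"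
  by (cases A) (auto simp: inverse_affinity_def top_unique)

lemma inverse_affinity_mult_le_1: "A \<le> 1 \<Longrightarrow> ennreal (inverse_affinity A) * A \<le> 1"
  by (cases A) (auto simp: inverse_affinity_def top_unique simp flip: ennreal_mult)

lemma renyi_div_eq_ln_inverse_affinity:
  assumes "renyi_affinity \<mu> \<alpha> p q \<noteq> 0" "renyi_affinity \<mu> \<alpha> p q \<le> 1" "\<alpha> < 1"
  shows "renyi_div \<mu> \<alpha> p q = ennreal (ln (inverse_affinity (renyi_affinity \<mu> \<alpha> p q)) / (1 - \<alpha>))"
  using assms
  by (cases "renyi_affinity \<mu> \<alpha> p q")
     (auto simp: renyi_div_def renyi_affinity_def[symmetric] inverse_affinity_def ln_div field_simps)

lemma KL_divergence_exp_1:
  "KL_divergence (exp 1) M Q = (\<integral>x. ln (enn2real (RN_deriv M Q x)) \<partial>Q)"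
  by (simp add: KL_divergence_def entropy_density_def comp_def log_def)

lemma (in sigma_finite_measure) AE_RN_deriv_real_pos:
  assumes "finite_measure N" "absolutely_continuous M N" "sets N = sets M"
  shows "AE x in N. 0 < enn2real (RN_deriv M N x) \<and> RN_deriv M N x = ennreal (enn2real (RN_deriv M N x))"
proof -
  obtain D where D: "AE x in M. RN_deriv M N x = ennreal (D x)" "AE x in N. 0 < D x" "\<And>x. 0 \<le> D x"
    using real_RN_deriv[OF assms] by blast
  have "AE x in N. RN_deriv M N x = ennreal (D x)"
    using absolutely_continuous_AE[OF assms(3,2) D(1)] .
  with D(2) show ?thesis
    by eventually_elim (use D(3) in auto)
qed

lemma (in sigma_finite_measure) integral_divide_RN_deriv_le:
  assumes ac: "absolutely_continuous M N" and sets: "sets N = sets M"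
    and [measurable]: "g \<in> borel_measurable M" and nonneg: "\<And>x. x \<in> space M \<Longrightarrow> 0 \<le> g x"
    and c: "(\<integral>\<^sup>+x. ennreal (g x) \<partial>M) = ennreal c" "0 \<le> c"
  shows "integrable N (\<lambda>x. g x / enn2real (RN_deriv M N x))"
    and "(\<integral>x. g x / enn2real (RN_deriv M N x) \<partial>N) \<le> c"
proof -
  have space_N: "space N = space M" using sets by (rule sets_eq_imp_space_eq)
  have "(\<integral>\<^sup>+x. ennreal (g x / enn2real (RN_deriv M N x)) \<partial>N)
      = (\<integral>\<^sup>+x. RN_deriv M N x * ennreal (g x / enn2real (RN_deriv M N x)) \<partial>M)"
    by (rule RN_deriv_nn_integral[OF ac sets]) simp
  also have "\<dots> \<le> ennreal c"
    unfolding c(1)[symmetric]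
  proof (intro nn_integral_mono)
    fix x assume "x \<in> space M"
    then show "RN_deriv M N x * ennreal (g x / enn2real (RN_deriv M N x)) \<le> ennreal (g x)"
      using nonneg by (cases "RN_deriv M N x") (auto simp flip: ennreal_mult)
  qed
  finally have nn_le: "(\<integral>\<^sup>+x. ennreal (g x / enn2real (RN_deriv M N x)) \<partial>N) \<le> ennreal c" .
  have [measurable]: "(\<lambda>x. g x / enn2real (RN_deriv M N x)) \<in> borel_measurable N"
    unfolding measurable_cong_sets[OF sets refl] by measurable
  have AE_nonneg: "AE x in N. 0 \<le> g x / enn2real (RN_deriv M N x)"
    using nonneg by (intro AE_I2) (simp add: space_N)
  show int: "integrable N (\<lambda>x. g x / enn2real (RN_deriv M N x))"
    using nn_le AE_nonneg by (intro integrableI_nonneg) (auto intro: le_less_trans)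
  have "ennreal (\<integral>x. g x / enn2real (RN_deriv M N x) \<partial>N) \<le> ennreal c"
    using nn_le by (subst nn_integral_eq_integral[OF int AE_nonneg, symmetric])
  then show "(\<integral>x. g x / enn2real (RN_deriv M N x) \<partial>N) \<le> c" using c(2) by simp
qed

text \<open>Donsker-Varadhan: pointwise, \<open>ln g \<le> ln f + ln c + g / (c f) - 1\<close> for the density \<open>f = dQ/dM\<close>,
  and the last term has \<open>Q\<close>-integral at most 1.\<close>
lemma nn_integral_ln_le_KL_divergence:
  fixes M Q :: "'a measure" and g :: "'a \<Rightarrow> real"
  assumes M: "prob_space M" and Q: "prob_space Q" and sets: "sets Q = sets M"
    and ac: "absolutely_continuous M Q"
    and int: "integrable Q (\<lambda>x. ln (enn2real (RN_deriv M Q x)))"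
    and [measurable]: "g \<in> borel_measurable M" and g1: "\<And>x. x \<in> space M \<Longrightarrow> 1 \<le> g x"
    and c: "(\<integral>\<^sup>+x. ennreal (g x) \<partial>M) = ennreal c"
  shows "(\<integral>\<^sup>+x. ennreal (ln (g x)) \<partial>Q) \<le> ennreal (KL_divergence (exp 1) M Q + ln c)"
    and "0 \<le> KL_divergence (exp 1) M Q + ln c"
proof -
  interpret M: prob_space M by fact
  interpret Q: prob_space Q by fact
  have space_Q: "space Q = space M" using sets by (rule sets_eq_imp_space_eq)
  have "(\<integral>\<^sup>+x. ennreal 1 \<partial>M) \<le> ennreal c" unfolding c[symmetric]
    by (intro nn_integral_mono) (auto simp: g1)
  then have c1: "1 \<le> c" by (simp add: M.emeasure_space_1)
  have g0: "0 \<le> g x" if "x \<in> space M" for x using g1[OF that] by simp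
  have "(\<integral>\<^sup>+x. ennreal (g x / c) \<partial>M) = ennreal c / ennreal c"
    using g0 c1 by (subst c[symmetric], subst nn_integral_divide[symmetric])
      (auto intro!: nn_integral_cong simp: divide_ennreal)
  also have "\<dots> = ennreal 1" using c1 by (simp add: divide_ennreal)
  finally have "(\<integral>\<^sup>+x. ennreal (g x / c) \<partial>M) = ennreal 1" .
  from M.integral_divide_RN_deriv_le[OF ac sets _ _ this zero_le_one]
  have ratio: "integrable Q (\<lambda>x. g x / c / enn2real (RN_deriv M Q x))"
    "(\<integral>x. g x / c / enn2real (RN_deriv M Q x) \<partial>Q) \<le> 1"
    using g0 c1 by simp_all
  define f where "f x = enn2real (RN_deriv M Q x)" for x
  define h where "h x = ln (f x) + ln c + g x / c / f x - 1" for x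
  have int_h: "integrable Q h" unfolding h_def f_def using int ratio(1) g0 c1 by simp
  have integral_h: "(\<integral>x. h x \<partial>Q) \<le> KL_divergence (exp 1) M Q + ln c"
    using int ratio g0 c1 by (simp add: h_def KL_divergence_exp_1 f_def Q.prob_space)
  have "AE x in Q. 0 \<le> ln (g x) \<and> ln (g x) \<le> h x"
    using M.AE_RN_deriv_real_pos[OF Q.finite_measure_axioms ac sets] AE_space
  proof eventually_elim
    case (elim x)
    then have f: "0 < f x" and g: "1 \<le> g x" using g1 by (auto simp: f_def space_Q)
    have "ln (g x / (c * f x)) \<le> g x / (c * f x) - 1"
      using f g c1 by (intro ln_le_minus_one) auto
    then show ?case using f g c1 by (simp add: h_def ln_div ln_mult)
  qed
  then have AE_h: "AE x in Q. 0 \<le> h x" and AE_ln_g: "AE x in Q. ln (g x) \<le> h x"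
    by (auto elim: eventually_mono)
  show "0 \<le> KL_divergence (exp 1) M Q + ln c"
    using integral_nonneg_AE[OF AE_h] integral_h by linarith
  have "(\<integral>\<^sup>+x. ennreal (ln (g x)) \<partial>Q) \<le> (\<integral>\<^sup>+x. ennreal (h x) \<partial>Q)"
    using AE_ln_g by (intro nn_integral_mono_AE) (auto elim!: eventually_mono intro: ennreal_leI)
  also have "\<dots> = ennreal (\<integral>x. h x \<partial>Q)"
    by (rule nn_integral_eq_integral[OF int_h AE_h])
  also have "\<dots> \<le> ennreal (KL_divergence (exp 1) M Q + ln c)"
    using integral_h by (rule ennreal_leI)
  finally show "(\<integral>\<^sup>+x. ennreal (ln (g x)) \<partial>Q) \<le> ennreal (KL_divergence (exp 1) M Q + ln c)" .
qed

lemma KL_divergence_nonneg: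
  assumes "prob_space M" "prob_space Q" "sets Q = sets M" "absolutely_continuous M Q"
    and "integrable Q (\<lambda>x. ln (enn2real (RN_deriv M Q x)))"
  shows "0 \<le> KL_divergence (exp 1) M Q"
  using nn_integral_ln_le_KL_divergence(2)[OF assms, of "\<lambda>_. 1" 1]
  by (simp add: prob_space.emeasure_space_1[OF assms(1)])

lemma kl_div_le_ennrealD:
  assumes "kl_div Q M \<le> ennreal K" "0 \<le> K"
  shows "sets Q = sets M" "absolutely_continuous M Q"
    and "integrable Q (\<lambda>x. ln (enn2real (RN_deriv M Q x)))"
    and "KL_divergence (exp 1) M Q \<le> K"
proof -
  have "kl_div Q M \<noteq> \<infinity>" using assms(1) by (auto simp: top_unique)
  then show "sets Q = sets M" "absolutely_continuous M Q"
    and "integrable Q (\<lambda>x. ln (enn2real (RN_deriv M Q x)))"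
    and "KL_divergence (exp 1) M Q \<le> K"
    using assms by (auto simp: kl_div_def split: if_splits)
qed

lemma nn_integral_ln_le_kl_div:
  assumes "prob_space M" "prob_space Q" and kl: "kl_div Q M \<le> ennreal K" "0 \<le> K"
    and "g \<in> borel_measurable M" "\<And>x. x \<in> space M \<Longrightarrow> 1 \<le> g x"
    and "(\<integral>\<^sup>+x. ennreal (g x) \<partial>M) = ennreal c"
  shows "(\<integral>\<^sup>+x. ennreal (ln (g x)) \<partial>Q) \<le> ennreal (K + ln c)"
proof -
  note kl_fin = kl_div_le_ennrealD[OF kl]
  note DV = nn_integral_ln_le_KL_divergence[OF assms(1,2) kl_fin(1-3) assms(5-7)]
  have "(\<integral>\<^sup>+x. ennreal (ln (g x)) \<partial>Q) \<le> ennreal (KL_divergence (exp 1) M Q + ln c)"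
    by (rule DV(1))
  also have "\<dots> \<le> ennreal (K + ln c)"
    using kl_fin(4) by (intro ennreal_leI) simp
  finally show ?thesis .
qed

lemma (in prob_space) integral_le_integral_add_sqrt:
  fixes f m :: "'a \<Rightarrow> real"
  assumes [measurable]: "f \<in> borel_measurable M" and int_m: "integrable M m"
    and v: "(\<integral>\<^sup>+x. ennreal ((f x - m x)\<^sup>2) \<partial>M) \<le> ennreal v" "0 \<le> v"
  shows "integrable M f" "(\<integral>x. f x \<partial>M) \<le> (\<integral>x. m x \<partial>M) + sqrt v"
proof -
  have [measurable]: "m \<in> borel_measurable M" using int_m by auto
  define d where "d x = f x - m x" for x
  have [measurable]: "d \<in> borel_measurable M" unfolding d_def by measurable
  have int_d2: "integrable M (\<lambda>x. (d x)\<^sup>2)"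
    using v(1) unfolding d_def by (intro integrableI_nonneg) (auto intro: le_less_trans)
  have int_d: "integrable M d"
    by (rule square_integrable_imp_integrable[OF _ int_d2]) measurable
  show "integrable M f"
    using Bochner_Integration.integrable_add[OF int_d int_m] by (simp add: d_def)
  have "(\<integral>x. d x \<partial>M)\<^sup>2 \<le> (\<integral>x. (d x)\<^sup>2 \<partial>M)"
    using variance_positive[of d] variance_eq[OF int_d int_d2] by simp
  also have "\<dots> \<le> v"
  proof -
    have "ennreal (\<integral>x. (d x)\<^sup>2 \<partial>M) = (\<integral>\<^sup>+x. ennreal ((d x)\<^sup>2) \<partial>M)"
      using int_d2 by (intro nn_integral_eq_integral[symmetric]) auto
    then have "ennreal (\<integral>x. (d x)\<^sup>2 \<partial>M) \<le> ennreal v" using v(1) by (simp add: d_def)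
    then show ?thesis using v(2) by simp
  qed
  finally have "(\<integral>x. d x \<partial>M) \<le> sqrt v" by (rule real_le_rsqrt)
  moreover have "(\<integral>x. f x \<partial>M) = (\<integral>x. d x + m x \<partial>M)" by (simp add: d_def)
  then have "(\<integral>x. f x \<partial>M) = (\<integral>x. d x \<partial>M) + (\<integral>x. m x \<partial>M)"
    using int_d int_m by simp
  ultimately show "(\<integral>x. f x \<partial>M) \<le> (\<integral>x. m x \<partial>M) + sqrt v" by linarith
qed

lemma (in prob_space) Markov_exceptional_set:
  assumes [measurable]: "f \<in> borel_measurable M"
    and int: "(\<integral>\<^sup>+x. f x \<partial>M) \<le> ennreal a" and a: "0 < a" and \<delta>: "0 < \<delta>"
  obtains B where "B \<in> events" "emeasure M B \<le> ennreal \<delta>"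
    and "\<And>x. x \<in> space M - B \<Longrightarrow> f x \<le> ennreal (a / \<delta>)"
proof
  define B where "B = {x \<in> space M. 1 \<le> ennreal (\<delta> / a) * f x}"
  show "B \<in> events" unfolding B_def by measurable
  have "emeasure M B \<le> ennreal (\<delta> / a) * (\<integral>\<^sup>+x. f x * indicator (space M) x \<partial>M)"
    unfolding B_def by (rule nn_integral_Markov_inequality) auto
  also have "(\<integral>\<^sup>+x. f x * indicator (space M) x \<partial>M) = (\<integral>\<^sup>+x. f x \<partial>M)"
    by (intro nn_integral_cong) simp
  also have "ennreal (\<delta> / a) * \<dots> \<le> ennreal (\<delta> / a) * ennreal a"
    by (intro mult_left_mono int) simp
  also have "\<dots> = ennreal \<delta>"
    using a \<delta> by (simp flip: ennreal_mult)
  finally show "emeasure M B \<le> ennreal \<delta>" .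
  fix x assume "x \<in> space M - B"
  then have less: "ennreal (\<delta> / a) * f x < 1" by (auto simp: B_def not_le)
  then have "f x \<noteq> \<infinity>" using a \<delta> by (auto simp: ennreal_mult_top)
  then obtain t where t: "f x = ennreal t" "0 \<le> t" by (cases "f x") auto
  have "ennreal (\<delta> / a * t) = ennreal (\<delta> / a) * ennreal t"
    using a \<delta> t by (intro ennreal_mult) auto
  then have "ennreal (\<delta> / a * t) < 1" using less t by simp
  then have "\<delta> / a * t < 1" by (simp add: ennreal_less_iff)
  then have "t \<le> a / \<delta>" using a \<delta> by (simp add: field_simps)
  then show "f x \<le> ennreal (a / \<delta>)" using t by (simp add: ennreal_leI)
qed

lemma (in prob_space) exists_event_Markov_bounds:
  assumes [measurable]: "f \<in> borel_measurable M" "g \<in> borel_measurable M"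
    and "(\<integral>\<^sup>+x. f x \<partial>M) \<le> ennreal a" "0 < a" "0 < \<epsilon>"
    and "(\<integral>\<^sup>+x. g x \<partial>M) \<le> ennreal b" "0 < b" "0 < \<eta>"
    and "AE x in M. P x"
  shows "\<exists>A \<in> events. 1 - \<epsilon> - \<eta> \<le> prob A \<and>
           (\<forall>x \<in> A. f x \<le> ennreal (a / \<epsilon>) \<and> g x \<le> ennreal (b / \<eta>) \<and> P x)"
proof -
  obtain B1 where B1: "B1 \<in> events" "emeasure M B1 \<le> ennreal \<epsilon>"
    "\<And>x. x \<in> space M - B1 \<Longrightarrow> f x \<le> ennreal (a / \<epsilon>)"
    using Markov_exceptional_set[OF assms(1,3-5)] by blast
  obtain B2 where B2: "B2 \<in> events" "emeasure M B2 \<le> ennreal \<eta>"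
    "\<And>x. x \<in> space M - B2 \<Longrightarrow> g x \<le> ennreal (b / \<eta>)"
    using Markov_exceptional_set[OF assms(2,6-8)] by blast
  obtain N where N: "{x \<in> space M. \<not> P x} \<subseteq> N" "emeasure M N = 0" "N \<in> events"
    using AE_E[OF assms(9)] by blast
  define A where "A = space M - (B1 \<union> B2 \<union> N)"
  have "prob (B1 \<union> B2 \<union> N) \<le> prob (B1 \<union> B2) + prob N"
    using B1 B2 N by (intro measure_Un_le) auto
  also have "prob (B1 \<union> B2) \<le> prob B1 + prob B2"
    using B1 B2 by (intro measure_Un_le) auto
  also have "prob B1 + prob B2 + prob N \<le> \<epsilon> + \<eta>"
    using B1(2) B2(2) N(2) assms(5,8) by (simp add: emeasure_eq_measure)
  finally have "prob (B1 \<union> B2 \<union> N) \<le> \<epsilon> + \<eta>" by simp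
  moreover have "prob A = 1 - prob (B1 \<union> B2 \<union> N)"
    unfolding A_def using B1 B2 N by (intro prob_compl) auto
  moreover have "A \<in> events" using B1 B2 N by (auto simp: A_def)
  moreover have "f x \<le> ennreal (a / \<epsilon>) \<and> g x \<le> ennreal (b / \<eta>) \<and> P x" if "x \<in> A" for x
    using that B1(3) B2(3) N(1) by (auto simp: A_def)
  ultimately show ?thesis by (intro bexI[of _ A]) auto
qed

definition gibbs_post :: "'a measure \<Rightarrow> ('a \<Rightarrow> real) \<Rightarrow> 'a measure" where
  "gibbs_post \<pi> w = density \<pi> (\<lambda>\<theta>. ennreal (w \<theta>) / (\<integral>\<^sup>+\<gamma>. ennreal (w \<gamma>) \<partial>\<pi>))"

lemma frac_post_eq_gibbs_post:
  "frac_post \<pi> p \<theta>0 \<alpha> x = gibbs_post \<pi> (\<lambda>\<theta>. (p \<theta> x / p \<theta>0 x) powr \<alpha>)"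
  by (simp add: frac_post_def gibbs_post_def)

locale gibbs_weight = prob_space \<pi> for \<pi> :: "'a measure" +
  fixes w :: "'a \<Rightarrow> real" and z :: real
  assumes w_measurable[measurable]: "w \<in> borel_measurable \<pi>"
    and w_nonneg: "\<And>\<theta>. \<theta> \<in> space \<pi> \<Longrightarrow> 0 \<le> w \<theta>"
    and nn_integral_w: "(\<integral>\<^sup>+\<theta>. ennreal (w \<theta>) \<partial>\<pi>) = ennreal z"
    and z_pos: "0 < z"
begin

lemma gibbs_post_eq_density: "gibbs_post \<pi> w = density \<pi> (\<lambda>\<theta>. ennreal (w \<theta> / z))"
  unfolding gibbs_post_def nn_integral_w
  using w_nonneg z_pos by (intro density_cong) (auto simp: divide_ennreal)

lemma sets_gibbs_post [measurable_cong]: "sets (gibbs_post \<pi> w) = sets \<pi>"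
  and space_gibbs_post: "space (gibbs_post \<pi> w) = space \<pi>"
  by (simp_all add: gibbs_post_eq_density)

lemma nn_integral_gibbs_post:
  assumes [measurable]: "g \<in> borel_measurable \<pi>" and nonneg: "\<And>\<theta>. \<theta> \<in> space \<pi> \<Longrightarrow> 0 \<le> g \<theta>"
  shows "(\<integral>\<^sup>+\<theta>. ennreal (g \<theta>) \<partial>gibbs_post \<pi> w) = (\<integral>\<^sup>+\<theta>. ennreal (w \<theta> * g \<theta>) \<partial>\<pi>) / ennreal z"
proof -
  have "(\<integral>\<^sup>+\<theta>. ennreal (g \<theta>) \<partial>gibbs_post \<pi> w) = (\<integral>\<^sup>+\<theta>. ennreal (w \<theta> * g \<theta>) / ennreal z \<partial>\<pi>)"
    unfolding gibbs_post_eq_density using w_nonneg nonneg z_pos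
    by (subst nn_integral_density) (auto intro!: nn_integral_cong simp: divide_ennreal simp flip: ennreal_mult)
  also have "\<dots> = (\<integral>\<^sup>+\<theta>. ennreal (w \<theta> * g \<theta>) \<partial>\<pi>) / ennreal z"
    by (rule nn_integral_divide) simp
  finally show ?thesis .
qed

lemma prob_space_gibbs_post: "prob_space (gibbs_post \<pi> w)"
proof
  have "emeasure (gibbs_post \<pi> w) (space (gibbs_post \<pi> w)) = (\<integral>\<^sup>+\<theta>. ennreal 1 \<partial>gibbs_post \<pi> w)"
    by simp
  also have "\<dots> = ennreal z / ennreal z"
    using w_nonneg by (subst nn_integral_gibbs_post) (auto simp: nn_integral_w)
  also have "\<dots> = 1" using z_pos by (simp add: divide_ennreal)
  finally show "emeasure (gibbs_post \<pi> w) (space (gibbs_post \<pi> w)) = 1" .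
qed

lemma AE_gibbs_post: "AE \<theta> in \<pi>. w \<theta> = 0 \<or> P \<theta> \<Longrightarrow> AE \<theta> in gibbs_post \<pi> w. P \<theta>"
  unfolding gibbs_post_eq_density by (subst AE_density) (auto elim: eventually_mono)

lemma RN_deriv_gibbs_post:
  assumes \<rho>: "finite_measure \<rho>" and sets: "sets \<rho> = sets \<pi>" and ac: "absolutely_continuous \<pi> \<rho>"
    and pos: "AE \<theta> in \<rho>. 0 < w \<theta>"
  shows "absolutely_continuous (gibbs_post \<pi> w) \<rho>"
    and "AE \<theta> in \<rho>. RN_deriv (gibbs_post \<pi> w) \<rho> \<theta> = RN_deriv \<pi> \<rho> \<theta> * ennreal (z / w \<theta>)"
proof -
  interpret post: prob_space "gibbs_post \<pi> w" by (rule prob_space_gibbs_post)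
  define h where "h \<theta> = RN_deriv \<pi> \<rho> \<theta> * ennreal (z / w \<theta>)" for \<theta>
  have [measurable]: "h \<in> borel_measurable (gibbs_post \<pi> w)" unfolding h_def by measurable
  have density_\<rho>: "density \<pi> (RN_deriv \<pi> \<rho>) = \<rho>" by (rule density_RN_deriv[OF ac sets])
  have "AE \<theta> in density \<pi> (RN_deriv \<pi> \<rho>). 0 < w \<theta>" using pos unfolding density_\<rho> .
  then have AE_pos: "AE \<theta> in \<pi>. RN_deriv \<pi> \<rho> \<theta> \<noteq> 0 \<longrightarrow> 0 < w \<theta>"
    by (subst (asm) AE_density) auto
  have "density (gibbs_post \<pi> w) h = density \<pi> (\<lambda>\<theta>. ennreal (w \<theta> / z) * h \<theta>)"
    unfolding gibbs_post_eq_density by (rule density_density_eq) (auto simp: h_def)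
  also have "\<dots> = density \<pi> (RN_deriv \<pi> \<rho>)"
  proof (rule density_cong)
    show "AE \<theta> in \<pi>. ennreal (w \<theta> / z) * h \<theta> = RN_deriv \<pi> \<rho> \<theta>"
      using AE_pos
    proof eventually_elim
      case (elim \<theta>)
      show ?case
      proof (cases "RN_deriv \<pi> \<rho> \<theta> = 0")
        case False
        with elim have "0 < w \<theta>" by simp
        then have "ennreal (w \<theta> / z) * ennreal (z / w \<theta>) = 1"
          using z_pos by (simp flip: ennreal_mult)
        then show ?thesis by (simp add: h_def ac_simps)
      qed (simp add: h_def)
    qed
  qed (auto simp: h_def)
  finally have density_h: "density (gibbs_post \<pi> w) h = \<rho>" by (simp add: density_\<rho>)
  show ac_post: "absolutely_continuous (gibbs_post \<pi> w) \<rho>"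
    using absolutely_continuousI_density[of h "gibbs_post \<pi> w"] by (simp add: density_h)
  have "AE \<theta> in gibbs_post \<pi> w. RN_deriv (gibbs_post \<pi> w) \<rho> \<theta> = h \<theta>"
    using post.RN_deriv_unique[of h \<rho>] by (simp add: density_h eq_commute)
  then have "AE \<theta> in \<rho>. RN_deriv (gibbs_post \<pi> w) \<rho> \<theta> = h \<theta>"
    using absolutely_continuous_AE[OF _ ac_post] by (simp add: sets sets_gibbs_post)
  then show "AE \<theta> in \<rho>. RN_deriv (gibbs_post \<pi> w) \<rho> \<theta> = RN_deriv \<pi> \<rho> \<theta> * ennreal (z / w \<theta>)"
    by (simp add: h_def)
qed

lemma kl_div_gibbs_post:
  assumes \<rho>: "prob_space \<rho>" and sets: "sets \<rho> = sets \<pi>" and ac: "absolutely_continuous \<pi> \<rho>"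
    and int_\<rho>: "integrable \<rho> (\<lambda>\<theta>. ln (enn2real (RN_deriv \<pi> \<rho> \<theta>)))"
    and pos: "AE \<theta> in \<rho>. 0 < w \<theta>" and int_w: "integrable \<rho> (\<lambda>\<theta>. ln (w \<theta>))"
  shows "kl_div \<rho> (gibbs_post \<pi> w) = ennreal (KL_divergence (exp 1) \<pi> \<rho> + ln z - (\<integral>\<theta>. ln (w \<theta>) \<partial>\<rho>))"
    and "0 \<le> KL_divergence (exp 1) \<pi> \<rho> + ln z - (\<integral>\<theta>. ln (w \<theta>) \<partial>\<rho>)"
proof -
  interpret \<rho>: prob_space \<rho> by fact
  note RN = RN_deriv_gibbs_post[OF \<rho>.finite_measure_axioms sets ac pos]
  have sets_post: "sets \<rho> = sets (gibbs_post \<pi> w)" by (simp add: sets sets_gibbs_post)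
  define L where "L \<theta> = ln (enn2real (RN_deriv \<pi> \<rho> \<theta>)) + ln z - ln (w \<theta>)" for \<theta>
  have AE_L: "AE \<theta> in \<rho>. ln (enn2real (RN_deriv (gibbs_post \<pi> w) \<rho> \<theta>)) = L \<theta>"
    using RN(2) pos AE_RN_deriv_real_pos[OF \<rho>.finite_measure_axioms ac sets]
  proof eventually_elim
    case (elim \<theta>)
    then have "enn2real (RN_deriv (gibbs_post \<pi> w) \<rho> \<theta>) = enn2real (RN_deriv \<pi> \<rho> \<theta>) * (z / w \<theta>)"
      using z_pos by (simp add: enn2real_mult)
    then show ?case using elim z_pos by (simp add: L_def ln_mult ln_div)
  qed
  have int_L: "integrable \<rho> L"
    unfolding L_def using int_\<rho> int_w by (intro Bochner_Integration.integrable_diff integrable_add) auto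
  have "(\<lambda>\<theta>. ln (enn2real (RN_deriv (gibbs_post \<pi> w) \<rho> \<theta>))) \<in> borel_measurable (gibbs_post \<pi> w)"
    by simp
  then have meas: "(\<lambda>\<theta>. ln (enn2real (RN_deriv (gibbs_post \<pi> w) \<rho> \<theta>))) \<in> borel_measurable \<rho>"
    by (simp add: measurable_cong_sets[OF sets_post refl])
  have meas_L: "L \<in> borel_measurable \<rho>" using int_L by auto
  have int_post: "integrable \<rho> (\<lambda>\<theta>. ln (enn2real (RN_deriv (gibbs_post \<pi> w) \<rho> \<theta>)))"
    using integrable_cong_AE[OF meas meas_L AE_L] int_L by simp
  have "KL_divergence (exp 1) (gibbs_post \<pi> w) \<rho> = (\<integral>\<theta>. L \<theta> \<partial>\<rho>)"
    unfolding KL_divergence_exp_1 by (rule integral_cong_AE[OF meas meas_L AE_L])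
  also have "\<dots> = (\<integral>\<theta>. ln (enn2real (RN_deriv \<pi> \<rho> \<theta>)) + ln z \<partial>\<rho>) - (\<integral>\<theta>. ln (w \<theta>) \<partial>\<rho>)"
    unfolding L_def using int_\<rho> int_w by (intro Bochner_Integration.integral_diff integrable_add) auto
  also have "(\<integral>\<theta>. ln (enn2real (RN_deriv \<pi> \<rho> \<theta>)) + ln z \<partial>\<rho>) = KL_divergence (exp 1) \<pi> \<rho> + ln z"
    unfolding KL_divergence_exp_1 using int_\<rho> by (subst Bochner_Integration.integral_add) (auto simp: \<rho>.prob_space)
  finally have KL_post: "KL_divergence (exp 1) (gibbs_post \<pi> w) \<rho> = KL_divergence (exp 1) \<pi> \<rho> + ln z - (\<integral>\<theta>. ln (w \<theta>) \<partial>\<rho>)" .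
  show "kl_div \<rho> (gibbs_post \<pi> w) = ennreal (KL_divergence (exp 1) \<pi> \<rho> + ln z - (\<integral>\<theta>. ln (w \<theta>) \<partial>\<rho>))"
    unfolding kl_div_def KL_post[symmetric] using sets_post RN(1) int_post by simp
  show "0 \<le> KL_divergence (exp 1) \<pi> \<rho> + ln z - (\<integral>\<theta>. ln (w \<theta>) \<partial>\<rho>)"
    using KL_divergence_nonneg[OF prob_space_gibbs_post \<rho> sets_post RN(1) int_post] unfolding KL_post .
qed

end

lemma nn_integral_ln_le_gibbs_variational:
  fixes \<pi> \<rho> Q :: "'a measure" and w g :: "'a \<Rightarrow> real" and K C :: real
  assumes \<pi>: "prob_space \<pi>" and [measurable]: "w \<in> borel_measurable \<pi>"
    and w_nonneg: "\<And>\<theta>. \<theta> \<in> space \<pi> \<Longrightarrow> 0 \<le> w \<theta>"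
    and \<rho>: "prob_space \<rho>" "sets \<rho> = sets \<pi>" and kl_\<rho>: "kl_div \<rho> \<pi> \<le> ennreal K" "0 \<le> K"
    and pos: "AE \<theta> in \<rho>. 0 < w \<theta>" and int_w: "integrable \<rho> (\<lambda>\<theta>. ln (w \<theta>))"
    and [measurable]: "g \<in> borel_measurable \<pi>" and g1: "\<And>\<theta>. \<theta> \<in> space \<pi> \<Longrightarrow> 1 \<le> g \<theta>"
    and C: "(\<integral>\<^sup>+\<theta>. ennreal (w \<theta> * g \<theta>) \<partial>\<pi>) \<le> ennreal C"
    and Q: "prob_space Q" and Q_min: "kl_div Q (gibbs_post \<pi> w) \<le> kl_div \<rho> (gibbs_post \<pi> w)"
  shows "(\<integral>\<^sup>+\<theta>. ennreal (ln (g \<theta>)) \<partial>Q) \<le> ennreal (K - (\<integral>\<theta>. ln (w \<theta>) \<partial>\<rho>) + ln C)"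
    and "AE \<theta> in Q. w \<theta> \<noteq> 0"
proof -
  interpret \<pi>: prob_space \<pi> by fact
  note \<rho>_fin = kl_div_le_ennrealD[OF kl_\<rho>]
  have Z_le: "(\<integral>\<^sup>+\<theta>. ennreal (w \<theta>) \<partial>\<pi>) \<le> (\<integral>\<^sup>+\<theta>. ennreal (w \<theta> * g \<theta>) \<partial>\<pi>)"
    using mult_left_mono[OF g1 w_nonneg] by (intro nn_integral_mono ennreal_leI) simp
  have Z_ne_0: "(\<integral>\<^sup>+\<theta>. ennreal (w \<theta>) \<partial>\<pi>) \<noteq> 0"
  proof
    assume "(\<integral>\<^sup>+\<theta>. ennreal (w \<theta>) \<partial>\<pi>) = 0"
    then have "AE \<theta> in \<pi>. ennreal (w \<theta>) = 0" by (simp add: nn_integral_0_iff_AE)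
    then have "AE \<theta> in \<rho>. ennreal (w \<theta>) = 0" by (rule absolutely_continuous_AE[OF \<rho>(2) \<rho>_fin(2)])
    with pos have "AE \<theta> in \<rho>. False" by eventually_elim simp
    then show False using \<rho>(1) by (simp add: prob_space.AE_False)
  qed
  obtain z where z: "(\<integral>\<^sup>+\<theta>. ennreal (w \<theta>) \<partial>\<pi>) = ennreal z" "0 < z"
    using Z_le C Z_ne_0 by (cases "\<integral>\<^sup>+\<theta>. ennreal (w \<theta>) \<partial>\<pi>") (auto simp: top_unique)
  obtain c where c: "(\<integral>\<^sup>+\<theta>. ennreal (w \<theta> * g \<theta>) \<partial>\<pi>) = ennreal c" "z \<le> c" "c \<le> C"
    using Z_le C z by (cases "\<integral>\<^sup>+\<theta>. ennreal (w \<theta> * g \<theta>) \<partial>\<pi>") (auto simp: top_unique ennreal_le_iff2)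
  interpret gibbs_weight \<pi> w z
    using w_nonneg z by unfold_locales auto
  note KP = kl_div_gibbs_post[OF \<rho>(1,2) \<rho>_fin(2,3) pos int_w]
  have Q_kl: "kl_div Q (gibbs_post \<pi> w) \<le> ennreal (KL_divergence (exp 1) \<pi> \<rho> + ln z - (\<integral>\<theta>. ln (w \<theta>) \<partial>\<rho>))"
    using Q_min by (simp add: KP(1))
  note Q_fin = kl_div_le_ennrealD[OF Q_kl KP(2)]
  have "AE \<theta> in gibbs_post \<pi> w. w \<theta> \<noteq> 0" by (rule AE_gibbs_post) simp
  then show "AE \<theta> in Q. w \<theta> \<noteq> 0" by (rule absolutely_continuous_AE[OF Q_fin(1,2)])
  have "(\<integral>\<^sup>+\<theta>. ennreal (g \<theta>) \<partial>gibbs_post \<pi> w) = ennreal (c / z)"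
    using g1 z(2) c(1,2) by (subst nn_integral_gibbs_post) (auto intro: order.trans[OF zero_le_one] simp: divide_ennreal)
  then have "(\<integral>\<^sup>+\<theta>. ennreal (ln (g \<theta>)) \<partial>Q)
      \<le> ennreal (KL_divergence (exp 1) \<pi> \<rho> + ln z - (\<integral>\<theta>. ln (w \<theta>) \<partial>\<rho>) + ln (c / z))"
    using g1 by (intro nn_integral_ln_le_kl_div[OF prob_space_gibbs_post Q Q_kl KP(2)])
      (auto simp: space_gibbs_post)
  also have "\<dots> \<le> ennreal (K - (\<integral>\<theta>. ln (w \<theta>) \<partial>\<rho>) + ln C)"
  proof (intro ennreal_leI)
    have "ln c \<le> ln C" using z(2) c(2,3) by simp
    then show "KL_divergence (exp 1) \<pi> \<rho> + ln z - (\<integral>\<theta>. ln (w \<theta>) \<partial>\<rho>) + ln (c / z)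
        \<le> K - (\<integral>\<theta>. ln (w \<theta>) \<partial>\<rho>) + ln C"
      using \<rho>_fin(4) z(2) c(2) by (simp add: ln_div)
  qed
  finally show "(\<integral>\<^sup>+\<theta>. ennreal (ln (g \<theta>)) \<partial>Q) \<le> ennreal (K - (\<integral>\<theta>. ln (w \<theta>) \<partial>\<rho>) + ln C)" .
qed

locale dominated_model = \<mu>: sigma_finite_measure \<mu> + \<pi>: prob_space \<pi>
  for \<mu> :: "'x measure" and \<pi> :: "'p measure" +
  fixes p :: "'p \<Rightarrow> 'x \<Rightarrow> real" and \<theta>0 :: 'p
  assumes p_measurable: "(\<lambda>(\<theta>, x). p \<theta> x) \<in> borel_measurable (\<pi> \<Otimes>\<^sub>M \<mu>)"
    and p_nonneg: "\<And>\<theta> x. \<theta> \<in> space \<pi> \<Longrightarrow> x \<in> space \<mu> \<Longrightarrow> 0 \<le> p \<theta> x"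
    and p_density: "\<And>\<theta>. \<theta> \<in> space \<pi> \<Longrightarrow> (\<integral>\<^sup>+x. ennreal (p \<theta> x) \<partial>\<mu>) = 1"
    and \<theta>0_in: "\<theta>0 \<in> space \<pi>"
begin

abbreviation P0 :: "'x measure" where "P0 \<equiv> density \<mu> (p \<theta>0)"

lemma measurable_p_pair [measurable]: "(\<lambda>z. p (fst z) (snd z)) \<in> borel_measurable (\<pi> \<Otimes>\<^sub>M \<mu>)"
  using p_measurable by (simp add: case_prod_beta')

lemma measurable_p: "\<theta> \<in> space \<pi> \<Longrightarrow> p \<theta> \<in> borel_measurable \<mu>"
  using measurable_comp[OF measurable_Pair1' measurable_p_pair] by (simp add: comp_def)

lemma measurable_p_param: "x \<in> space \<mu> \<Longrightarrow> (\<lambda>\<theta>. p \<theta> x) \<in> borel_measurable \<pi>"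
  using measurable_comp[OF measurable_Pair2' measurable_p_pair] by (simp add: comp_def)

lemma measurable_p0 [measurable]: "p \<theta>0 \<in> borel_measurable \<mu>"
  by (rule measurable_p[OF \<theta>0_in])

lemma measurable_p_pair_P0 [measurable]: "(\<lambda>z. p (fst z) (snd z)) \<in> borel_measurable (\<pi> \<Otimes>\<^sub>M P0)"
  using measurable_p_pair unfolding measurable_cong_sets[OF sets_pair_measure_cong[OF refl sets_density] refl] .

lemma prob_space_P0: "prob_space P0"
proof
  have "emeasure P0 (space P0) = (\<integral>\<^sup>+x. ennreal (p \<theta>0 x) \<partial>\<mu>)"
    by (subst emeasure_density) (auto intro!: nn_integral_cong)
  then show "emeasure P0 (space P0) = 1" using p_density[OF \<theta>0_in] by simp
qed

sublocale P0: prob_space P0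
  by (rule prob_space_P0)

lemma nn_integral_swap_P0:
  assumes \<rho>: "sigma_finite_measure \<rho>" "sets \<rho> = sets \<pi>"
    and f: "(\<lambda>(\<theta>, x). f \<theta> x) \<in> borel_measurable (\<pi> \<Otimes>\<^sub>M \<mu>)"
  shows "(\<integral>\<^sup>+x. (\<integral>\<^sup>+\<theta>. f \<theta> x \<partial>\<rho>) \<partial>P0) = (\<integral>\<^sup>+\<theta>. (\<integral>\<^sup>+x. f \<theta> x \<partial>P0) \<partial>\<rho>)"
    and "(\<lambda>x. \<integral>\<^sup>+\<theta>. f \<theta> x \<partial>\<rho>) \<in> borel_measurable P0"
proof -
  interpret \<rho>: sigma_finite_measure \<rho> by fact
  interpret pair_sigma_finite \<rho> P0
    unfolding pair_sigma_finite_def using \<rho>.sigma_finite_measure_axioms P0.sigma_finite_measure_axioms by simp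
  have sets_eq: "sets (\<rho> \<Otimes>\<^sub>M P0) = sets (\<pi> \<Otimes>\<^sub>M \<mu>)"
    by (rule sets_pair_measure_cong[OF \<rho>(2) sets_density])
  have f': "(\<lambda>(\<theta>, x). f \<theta> x) \<in> borel_measurable (\<rho> \<Otimes>\<^sub>M P0)"
    using f unfolding measurable_cong_sets[OF sets_eq refl] .
  show "(\<integral>\<^sup>+x. (\<integral>\<^sup>+\<theta>. f \<theta> x \<partial>\<rho>) \<partial>P0) = (\<integral>\<^sup>+\<theta>. (\<integral>\<^sup>+x. f \<theta> x \<partial>P0) \<partial>\<rho>)"
    by (rule Fubini'[OF f'])
  show "(\<lambda>x. \<integral>\<^sup>+\<theta>. f \<theta> x \<partial>\<rho>) \<in> borel_measurable P0"
    using measurable_pair_swap[OF f'] by (intro \<rho>.borel_measurable_nn_integral) (simp add: case_prod_beta')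
qed

lemma AE_P0_commute:
  assumes \<rho>: "sigma_finite_measure \<rho>" "sets \<rho> = sets \<pi>"
    and P: "{z \<in> space (\<pi> \<Otimes>\<^sub>M \<mu>). P (fst z) (snd z)} \<in> sets (\<pi> \<Otimes>\<^sub>M \<mu>)"
    and AE: "AE \<theta> in \<rho>. AE x in P0. P \<theta> x"
  shows "AE x in P0. AE \<theta> in \<rho>. P \<theta> x"
proof -
  interpret \<rho>: sigma_finite_measure \<rho> by fact
  interpret pair_sigma_finite \<rho> P0
    unfolding pair_sigma_finite_def using \<rho>.sigma_finite_measure_axioms P0.sigma_finite_measure_axioms by simp
  have sets_eq: "sets (\<rho> \<Otimes>\<^sub>M P0) = sets (\<pi> \<Otimes>\<^sub>M \<mu>)"
    by (rule sets_pair_measure_cong[OF \<rho>(2) sets_density])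
  have "{z \<in> space (\<rho> \<Otimes>\<^sub>M P0). P (fst z) (snd z)} \<in> sets (\<rho> \<Otimes>\<^sub>M P0)"
    using P unfolding sets_eq sets_eq_imp_space_eq[OF sets_eq] .
  then show ?thesis using AE_commute AE by blast
qed

lemma AE_P0_likelihoods_pos:
  assumes "sigma_finite_measure \<rho>" "sets \<rho> = sets \<pi>" and "AE \<theta> in \<rho>. AE x in P0. 0 < p \<theta> x"
  shows "AE x in P0. 0 < p \<theta>0 x \<and> (AE \<theta> in \<rho>. 0 < p \<theta> x)"
proof -
  have "AE x in P0. 0 < p \<theta>0 x"
    by (subst AE_density) (auto simp: ennreal_less_zero_iff)
  moreover have "AE x in P0. AE \<theta> in \<rho>. 0 < p \<theta> x"
    using assms by (intro AE_P0_commute) auto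
  ultimately show ?thesis by eventually_elim simp
qed

lemma affinity_le_1:
  "\<theta> \<in> space \<pi> \<Longrightarrow> 0 < \<alpha> \<Longrightarrow> \<alpha> < 1 \<Longrightarrow> renyi_affinity \<mu> \<alpha> (p \<theta>) (p \<theta>0) \<le> 1"
  by (rule renyi_affinity_le_1) (use measurable_p p_nonneg p_density \<theta>0_in in auto)

lemma measurable_affinity [measurable]:
  "(\<lambda>\<theta>. renyi_affinity \<mu> \<alpha> (p \<theta>) (p \<theta>0)) \<in> borel_measurable \<pi>"
  unfolding renyi_affinity_def by measurable

lemma nn_integral_P0_tempered_likelihood:
  "\<theta> \<in> space \<pi> \<Longrightarrow> 0 < \<alpha> \<Longrightarrow>
    (\<integral>\<^sup>+x. ennreal ((p \<theta> x / p \<theta>0 x) powr \<alpha>) \<partial>P0) = renyi_affinity \<mu> \<alpha> (p \<theta>) (p \<theta>0)"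
  by (rule nn_integral_density_ratio_powr) (use measurable_p p_nonneg \<theta>0_in in auto)

lemma nn_integral_tempered_likelihood_inverse_affinity:
  assumes \<alpha>: "0 < \<alpha>" "\<alpha> < 1"
  shows "(\<integral>\<^sup>+x. (\<integral>\<^sup>+\<theta>. ennreal ((p \<theta> x / p \<theta>0 x) powr \<alpha> *
            inverse_affinity (renyi_affinity \<mu> \<alpha> (p \<theta>) (p \<theta>0))) \<partial>\<pi>) \<partial>P0) \<le> 1"
proof -
  let ?A = "\<lambda>\<theta>. renyi_affinity \<mu> \<alpha> (p \<theta>) (p \<theta>0)"
  have "(\<integral>\<^sup>+x. (\<integral>\<^sup>+\<theta>. ennreal ((p \<theta> x / p \<theta>0 x) powr \<alpha> * inverse_affinity (?A \<theta>)) \<partial>\<pi>) \<partial>P0)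
      = (\<integral>\<^sup>+\<theta>. (\<integral>\<^sup>+x. ennreal ((p \<theta> x / p \<theta>0 x) powr \<alpha> * inverse_affinity (?A \<theta>)) \<partial>P0) \<partial>\<pi>)"
    by (rule nn_integral_swap_P0(1)[OF \<pi>.sigma_finite_measure_axioms refl]) measurable
  also have "\<dots> \<le> (\<integral>\<^sup>+\<theta>. 1 \<partial>\<pi>)"
  proof (intro nn_integral_mono)
    fix \<theta> assume \<theta>: "\<theta> \<in> space \<pi>"
    note measurable_p[OF \<theta>, measurable]
    have "(\<integral>\<^sup>+x. ennreal ((p \<theta> x / p \<theta>0 x) powr \<alpha> * inverse_affinity (?A \<theta>)) \<partial>P0)
        = ennreal (inverse_affinity (?A \<theta>)) * (\<integral>\<^sup>+x. ennreal ((p \<theta> x / p \<theta>0 x) powr \<alpha>) \<partial>P0)"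
      using inverse_affinity_ge_1[OF affinity_le_1[OF \<theta> \<alpha>]]
      by (subst nn_integral_cmult[symmetric]) (auto intro!: nn_integral_cong simp: ennreal_mult' mult.commute)
    also have "\<dots> = ennreal (inverse_affinity (?A \<theta>)) * ?A \<theta>"
      using \<theta> \<alpha> by (simp add: nn_integral_P0_tempered_likelihood)
    also have "\<dots> \<le> 1"
      by (rule inverse_affinity_mult_le_1[OF affinity_le_1[OF \<theta> \<alpha>]])
    finally show "(\<integral>\<^sup>+x. ennreal ((p \<theta> x / p \<theta>0 x) powr \<alpha> * inverse_affinity (?A \<theta>)) \<partial>P0) \<le> 1" .
  qed
  also have "\<dots> = 1" by (simp add: \<pi>.emeasure_space_1)
  finally show ?thesis .
qed

lemma AE_tempered_likelihood_eq_0_if_affinity_eq_0: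
  assumes "0 < \<alpha>"
  shows "AE x in P0. AE \<theta> in \<pi>. renyi_affinity \<mu> \<alpha> (p \<theta>) (p \<theta>0) = 0 \<longrightarrow> (p \<theta> x / p \<theta>0 x) powr \<alpha> = 0"
proof (rule AE_P0_commute[OF \<pi>.sigma_finite_measure_axioms refl])
  show "{z \<in> space (\<pi> \<Otimes>\<^sub>M \<mu>). renyi_affinity \<mu> \<alpha> (p (fst z)) (p \<theta>0) = 0 \<longrightarrow>
      (p (fst z) (snd z) / p \<theta>0 (snd z)) powr \<alpha> = 0} \<in> sets (\<pi> \<Otimes>\<^sub>M \<mu>)"
    by measurable
  show "AE \<theta> in \<pi>. AE x in P0. renyi_affinity \<mu> \<alpha> (p \<theta>) (p \<theta>0) = 0 \<longrightarrow> (p \<theta> x / p \<theta>0 x) powr \<alpha> = 0"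
  proof (rule AE_I2, cases)
    fix \<theta> assume \<theta>: "\<theta> \<in> space \<pi>" and A: "renyi_affinity \<mu> \<alpha> (p \<theta>) (p \<theta>0) = 0"
    note measurable_p[OF \<theta>, measurable]
    have "(\<integral>\<^sup>+x. ennreal ((p \<theta> x / p \<theta>0 x) powr \<alpha>) \<partial>P0) = 0"
      using \<theta> assms A by (simp add: nn_integral_P0_tempered_likelihood)
    then have "AE x in P0. ennreal ((p \<theta> x / p \<theta>0 x) powr \<alpha>) = 0"
      by (subst (asm) nn_integral_0_iff_AE) auto
    then show "AE x in P0. renyi_affinity \<mu> \<alpha> (p \<theta>) (p \<theta>0) = 0 \<longrightarrow> (p \<theta> x / p \<theta>0 x) powr \<alpha> = 0"
      by eventually_elim simp
  qed simp
qed

lemma nn_integral_renyi_div_eq_ln_inverse_affinity: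
  assumes \<alpha>: "0 < \<alpha>" "\<alpha> < 1" and sets: "sets Q = sets \<pi>"
    and nonzero: "AE \<theta> in Q. renyi_affinity \<mu> \<alpha> (p \<theta>) (p \<theta>0) \<noteq> 0"
  shows "(\<integral>\<^sup>+\<theta>. renyi_div \<mu> \<alpha> (p \<theta>) (p \<theta>0) \<partial>Q)
    = (\<integral>\<^sup>+\<theta>. ennreal (ln (inverse_affinity (renyi_affinity \<mu> \<alpha> (p \<theta>) (p \<theta>0)))) \<partial>Q) * ennreal (1 / (1 - \<alpha>))"
proof -
  let ?lng = "\<lambda>\<theta>. ln (inverse_affinity (renyi_affinity \<mu> \<alpha> (p \<theta>) (p \<theta>0)))"
  have space_Q: "space Q = space \<pi>" using sets by (rule sets_eq_imp_space_eq)
  have "(\<integral>\<^sup>+\<theta>. renyi_div \<mu> \<alpha> (p \<theta>) (p \<theta>0) \<partial>Q) = (\<integral>\<^sup>+\<theta>. ennreal (?lng \<theta>) * ennreal (1 / (1 - \<alpha>)) \<partial>Q)"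
  proof (rule nn_integral_cong_AE)
    show "AE \<theta> in Q. renyi_div \<mu> \<alpha> (p \<theta>) (p \<theta>0) = ennreal (?lng \<theta>) * ennreal (1 / (1 - \<alpha>))"
      using nonzero AE_space
    proof eventually_elim
      case (elim \<theta>)
      then have "renyi_affinity \<mu> \<alpha> (p \<theta>) (p \<theta>0) \<le> 1" using affinity_le_1 \<alpha> by (simp add: space_Q)
      with elim \<alpha> show ?case
        by (simp add: renyi_div_eq_ln_inverse_affinity divide_inverse ennreal_mult'')
    qed
  qed
  also have "\<dots> = (\<integral>\<^sup>+\<theta>. ennreal (?lng \<theta>) \<partial>Q) * ennreal (1 / (1 - \<alpha>))"
    using sets by (intro nn_integral_multc) (simp add: measurable_cong_sets[OF sets refl])
  finally show ?thesis .
qed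

lemma nn_integral_renyi_div_le:
  fixes \<rho> Q :: "'p measure" and x :: 'x and \<alpha> \<epsilon> K R :: real
  assumes \<alpha>: "0 < \<alpha>" "\<alpha> < 1" and \<epsilon>: "0 < \<epsilon>"
    and \<rho>: "prob_space \<rho>" "sets \<rho> = sets \<pi>" and kl_\<rho>: "kl_div \<rho> \<pi> \<le> ennreal K" "0 \<le> K"
    and x: "x \<in> space \<mu>" "0 < p \<theta>0 x" and pos: "AE \<theta> in \<rho>. 0 < p \<theta> x"
    and int_llr: "integrable \<rho> (\<lambda>\<theta>. llr p \<theta> \<theta>0 x)" and R: "(\<integral>\<theta>. llr p \<theta> \<theta>0 x \<partial>\<rho>) \<le> R"
    and zero: "AE \<theta> in \<pi>. renyi_affinity \<mu> \<alpha> (p \<theta>) (p \<theta>0) = 0 \<longrightarrow> (p \<theta> x / p \<theta>0 x) powr \<alpha> = 0"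
    and weight: "(\<integral>\<^sup>+\<theta>. ennreal ((p \<theta> x / p \<theta>0 x) powr \<alpha> *
                  inverse_affinity (renyi_affinity \<mu> \<alpha> (p \<theta>) (p \<theta>0))) \<partial>\<pi>) \<le> ennreal (1 / \<epsilon>)"
    and Q: "prob_space Q" "sets Q = sets \<pi>" "absolutely_continuous \<pi> Q"
    and Q_min: "kl_div Q (frac_post \<pi> p \<theta>0 \<alpha> x) \<le> kl_div \<rho> (frac_post \<pi> p \<theta>0 \<alpha> x)"
  shows "(\<integral>\<^sup>+\<theta>. renyi_div \<mu> \<alpha> (p \<theta>) (p \<theta>0) \<partial>Q) \<le> ennreal ((K + \<alpha> * R - ln \<epsilon>) / (1 - \<alpha>))"
proof -
  note measurable_p_param[OF x(1), measurable]
  have [measurable]: "(\<lambda>\<theta>. llr p \<theta> \<theta>0 x) \<in> borel_measurable \<pi>" unfolding llr_def by measurable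
  have ln_w: "AE \<theta> in \<rho>. ln ((p \<theta> x / p \<theta>0 x) powr \<alpha>) = - \<alpha> * llr p \<theta> \<theta>0 x"
    using pos by eventually_elim (use x(2) in \<open>simp add: llr_def ln_div algebra_simps\<close>)
  have int_ln_w: "integrable \<rho> (\<lambda>\<theta>. ln ((p \<theta> x / p \<theta>0 x) powr \<alpha>))"
    using integrable_cong_AE[OF _ _ ln_w] int_llr \<rho>(2) by (simp add: measurable_cong_sets[OF \<rho>(2) refl])
  have "(\<integral>\<theta>. ln ((p \<theta> x / p \<theta>0 x) powr \<alpha>) \<partial>\<rho>) = - \<alpha> * (\<integral>\<theta>. llr p \<theta> \<theta>0 x \<partial>\<rho>)"
    using integral_cong_AE[OF _ _ ln_w] \<rho>(2) by (simp add: measurable_cong_sets[OF \<rho>(2) refl])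
  then have bound: "K - (\<integral>\<theta>. ln ((p \<theta> x / p \<theta>0 x) powr \<alpha>) \<partial>\<rho>) + ln (1 / \<epsilon>) \<le> K + \<alpha> * R - ln \<epsilon>"
    using R \<alpha> \<epsilon> by (simp add: ln_div mult_left_mono)
  have pos_w: "AE \<theta> in \<rho>. 0 < (p \<theta> x / p \<theta>0 x) powr \<alpha>"
    using pos by eventually_elim (use x(2) in simp)
  note variational = nn_integral_ln_le_gibbs_variational[OF \<pi>.prob_space_axioms _ _ \<rho> kl_\<rho> pos_w int_ln_w _
      inverse_affinity_ge_1[OF affinity_le_1] weight Q(1) Q_min[unfolded frac_post_eq_gibbs_post]]
  have "(\<integral>\<^sup>+\<theta>. ennreal (ln (inverse_affinity (renyi_affinity \<mu> \<alpha> (p \<theta>) (p \<theta>0)))) \<partial>Q)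
      \<le> ennreal (K - (\<integral>\<theta>. ln ((p \<theta> x / p \<theta>0 x) powr \<alpha>) \<partial>\<rho>) + ln (1 / \<epsilon>))"
    using \<alpha> by (intro variational(1)) auto
  also have "\<dots> \<le> ennreal (K + \<alpha> * R - ln \<epsilon>)"
    using bound by (rule ennreal_leI)
  finally have ln_g: "(\<integral>\<^sup>+\<theta>. ennreal (ln (inverse_affinity (renyi_affinity \<mu> \<alpha> (p \<theta>) (p \<theta>0)))) \<partial>Q)
      \<le> ennreal (K + \<alpha> * R - ln \<epsilon>)" .
  have "AE \<theta> in Q. renyi_affinity \<mu> \<alpha> (p \<theta>) (p \<theta>0) \<noteq> 0"
    using variational(2) absolutely_continuous_AE[OF Q(2,3) zero] \<alpha>
    by (auto elim: eventually_mono)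
  then show ?thesis
    using \<alpha> by (simp add: nn_integral_renyi_div_eq_ln_inverse_affinity Q(2) divide_inverse ennreal_mult''
        mult_right_mono[OF ln_g])
qed

theorem tempered_posterior_renyi_concentration:
  fixes \<F> :: "'p measure set" and \<rho> :: "'p measure" and Q :: "'x \<Rightarrow> 'p measure" and B \<alpha> \<epsilon> \<eta> :: real
  assumes \<F>: "\<And>\<rho>'. \<rho>' \<in> \<F> \<Longrightarrow> prob_space \<rho>' \<and> sets \<rho>' = sets \<pi> \<and> absolutely_continuous \<pi> \<rho>'"
    and B: "0 < B" and \<rho>_in: "\<rho> \<in> \<F>"
    and cond_i_fin: "AE \<theta> in \<rho>. (AE x in P0. p \<theta> x > 0) \<and> integrable P0 (llr p \<theta> \<theta>0)"
    and cond_i_int: "integrable \<rho> (\<lambda>\<theta>. \<integral>x. llr p \<theta> \<theta>0 x \<partial>P0)"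
    and cond_i: "(\<integral>\<theta>. (\<integral>x. llr p \<theta> \<theta>0 x \<partial>P0) \<partial>\<rho>) \<le> B"
    and cond_ii: "(\<integral>\<^sup>+\<theta>. (\<integral>\<^sup>+x. ennreal ((llr p \<theta> \<theta>0 x - (\<integral>y. llr p \<theta> \<theta>0 y \<partial>P0))\<^sup>2) \<partial>P0) \<partial>\<rho>) \<le> ennreal B"
    and cond_iii: "kl_div \<rho> \<pi> \<le> ennreal B"
    and \<alpha>: "0 < \<alpha>" "\<alpha> < 1" and \<epsilon>: "0 < \<epsilon>" and \<eta>: "0 < \<eta>"
    and Q_var: "AE x in P0. Q x \<in> \<F> \<and>
                  (\<forall>\<rho>'\<in>\<F>. kl_div (Q x) (frac_post \<pi> p \<theta>0 \<alpha> x) \<le> kl_div \<rho>' (frac_post \<pi> p \<theta>0 \<alpha> x))"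
  shows "\<exists>A \<in> sets P0. 1 - \<epsilon> - \<eta> \<le> measure P0 A \<and>
           (\<forall>x\<in>A. (\<integral>\<^sup>+\<theta>. renyi_div \<mu> \<alpha> (p \<theta>) (p \<theta>0) \<partial>Q x)
              \<le> ennreal (((\<alpha> + 1) * B + \<alpha> * sqrt (B / \<eta>) - ln \<epsilon>) / (1 - \<alpha>)))"
proof -
  have \<rho>: "prob_space \<rho>" "sets \<rho> = sets \<pi>" "absolutely_continuous \<pi> \<rho>" using \<F>[OF \<rho>_in] by auto
  interpret \<rho>: prob_space \<rho> by (rule \<rho>(1))
  define m where "m \<theta> = (\<integral>y. llr p \<theta> \<theta>0 y \<partial>P0)" for \<theta>
  have [measurable]: "m \<in> borel_measurable \<pi>" unfolding m_def llr_def by measurable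
  define V where "V x = (\<integral>\<^sup>+\<theta>. ennreal ((llr p \<theta> \<theta>0 x - m \<theta>)\<^sup>2) \<partial>\<rho>)" for x
  define G where "G x = (\<integral>\<^sup>+\<theta>. ennreal ((p \<theta> x / p \<theta>0 x) powr \<alpha> *
                  inverse_affinity (renyi_affinity \<mu> \<alpha> (p \<theta>) (p \<theta>0))) \<partial>\<pi>)" for x
  have V_swap: "(\<integral>\<^sup>+x. V x \<partial>P0) = (\<integral>\<^sup>+\<theta>. (\<integral>\<^sup>+x. ennreal ((llr p \<theta> \<theta>0 x - m \<theta>)\<^sup>2) \<partial>P0) \<partial>\<rho>)"
    and [measurable]: "V \<in> borel_measurable P0"
    unfolding V_def llr_def by (rule nn_integral_swap_P0[OF \<rho>.sigma_finite_measure_axioms \<rho>(2)]; measurable)+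
  have [measurable]: "G \<in> borel_measurable P0"
    unfolding G_def by (rule nn_integral_swap_P0(2)[OF \<pi>.sigma_finite_measure_axioms refl]) measurable
  define good where "good x \<longleftrightarrow> (AE \<theta> in \<rho>. 0 < p \<theta> x) \<and> 0 < p \<theta>0 x \<and>
      (AE \<theta> in \<pi>. renyi_affinity \<mu> \<alpha> (p \<theta>) (p \<theta>0) = 0 \<longrightarrow> (p \<theta> x / p \<theta>0 x) powr \<alpha> = 0) \<and>
      Q x \<in> \<F> \<and> (\<forall>\<rho>'\<in>\<F>. kl_div (Q x) (frac_post \<pi> p \<theta>0 \<alpha> x) \<le> kl_div \<rho>' (frac_post \<pi> p \<theta>0 \<alpha> x))" for x
  have "AE \<theta> in \<rho>. AE x in P0. 0 < p \<theta> x"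
    using cond_i_fin by (auto elim: eventually_mono)
  note AE_P0_likelihoods_pos[OF \<rho>.sigma_finite_measure_axioms \<rho>(2) this]
    AE_tempered_likelihood_eq_0_if_affinity_eq_0[OF \<alpha>(1)] Q_var
  then have "AE x in P0. good x"
    unfolding good_def by eventually_elim blast
  then obtain A where A: "A \<in> sets P0" "1 - \<epsilon> - \<eta> \<le> measure P0 A"
    and A_good: "\<And>x. x \<in> A \<Longrightarrow> G x \<le> ennreal (1 / \<epsilon>) \<and> V x \<le> ennreal (B / \<eta>) \<and> good x"
    using P0.exists_event_Markov_bounds[of G V 1 \<epsilon> B \<eta> good]
      nn_integral_tempered_likelihood_inverse_affinity[OF \<alpha>] V_swap cond_ii B \<epsilon> \<eta>
    unfolding G_def[symmetric] m_def[symmetric] by auto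
  show ?thesis
  proof (intro bexI[OF _ A(1)] conjI ballI A(2))
    fix x assume "x \<in> A"
    note x = A_good[OF this, unfolded good_def]
    have x_space: "x \<in> space \<mu>" using sets.sets_into_space[OF A(1)] \<open>x \<in> A\<close> by auto
    have [measurable]: "(\<lambda>\<theta>. llr p \<theta> \<theta>0 x) \<in> borel_measurable \<rho>"
      using measurable_p_param[OF x_space] unfolding llr_def measurable_cong_sets[OF \<rho>(2) refl] by measurable
    note llr_bound = \<rho>.integral_le_integral_add_sqrt[OF _ cond_i_int[folded m_def], of "\<lambda>\<theta>. llr p \<theta> \<theta>0 x" "B / \<eta>"]
    have "(\<integral>\<^sup>+\<theta>. renyi_div \<mu> \<alpha> (p \<theta>) (p \<theta>0) \<partial>Q x) \<le> ennreal ((B + \<alpha> * (B + sqrt (B / \<eta>)) - ln \<epsilon>) / (1 - \<alpha>))"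
      using x llr_bound B \<eta> \<F>[of "Q x"] \<rho>_in cond_i[folded m_def] unfolding V_def G_def
      by (intro nn_integral_renyi_div_le[OF \<alpha> \<epsilon> \<rho>(1,2) cond_iii _ x_space]) auto
    then show "(\<integral>\<^sup>+\<theta>. renyi_div \<mu> \<alpha> (p \<theta>) (p \<theta>0) \<partial>Q x)
        \<le> ennreal (((\<alpha> + 1) * B + \<alpha> * sqrt (B / \<eta>) - ln \<epsilon>) / (1 - \<alpha>))"
      by (simp add: algebra_simps)
  qed
qed

end

theorem mainTheorem2:
  fixes \<Theta> :: "(real ^ 'd) set"
    and \<theta>0 :: "real ^ 'd"
    and \<mu> :: "'x measure"
    and p :: "real ^ 'd \<Rightarrow> 'x \<Rightarrow> real"
    and \<pi> :: "(real ^ 'd) measure"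
    and \<F> :: "(real ^ 'd) measure set"
    and n :: nat
    and \<epsilon>n :: real
    and \<rho>n :: "(real ^ 'd) measure"
    and \<alpha> \<epsilon> \<eta> :: real
    and Q :: "'x \<Rightarrow> (real ^ 'd) measure"
  assumes n_pos: "n \<ge> 1"
    and \<mu>_sf: "sigma_finite_measure \<mu>"
    and \<theta>0_in: "\<theta>0 \<in> \<Theta>"
    and p_meas: "(\<lambda>(\<theta>, x). p \<theta> x) \<in> borel_measurable (restrict_space borel \<Theta> \<Otimes>\<^sub>M \<mu>)"
    and p_nonneg: "\<And>\<theta> x. \<theta> \<in> \<Theta> \<Longrightarrow> x \<in> space \<mu> \<Longrightarrow> 0 \<le> p \<theta> x"
    and p_dens: "\<And>\<theta>. \<theta> \<in> \<Theta> \<Longrightarrow> (\<integral>\<^sup>+ x. ennreal (p \<theta> x) \<partial>\<mu>) = 1"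
    and \<pi>_prob: "prob_space \<pi>"
    and \<pi>_sets: "sets \<pi> = sets (restrict_space borel \<Theta>)"
    and \<F>_def: "\<And>\<rho>. \<rho> \<in> \<F> \<Longrightarrow> prob_space \<rho> \<and> sets \<rho> = sets \<pi> \<and> absolutely_continuous \<pi> \<rho>"
    and \<epsilon>n_pos: "\<epsilon>n > 0"
    and \<rho>n_in: "\<rho>n \<in> \<F>"
    and cond_i_fin: "AE \<theta> in \<rho>n. (AE x in density \<mu> (p \<theta>0). p \<theta> x > 0)
                         \<and> integrable (density \<mu> (p \<theta>0)) (llr p \<theta> \<theta>0)"
    and cond_i_int: "integrable \<rho>n (\<lambda>\<theta>. \<integral> x. llr p \<theta> \<theta>0 x \<partial>density \<mu> (p \<theta>0))"
    and cond_i: "(\<integral> \<theta>. (\<integral> x. llr p \<theta> \<theta>0 x \<partial>density \<mu> (p \<theta>0)) \<partial>\<rho>n) \<le> real n * \<epsilon>n"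
    and cond_ii: "(\<integral>\<^sup>+ \<theta>. (\<integral>\<^sup>+ x. ennreal ((llr p \<theta> \<theta>0 x
                      - (\<integral> y. llr p \<theta> \<theta>0 y \<partial>density \<mu> (p \<theta>0)))\<^sup>2) \<partial>density \<mu> (p \<theta>0)) \<partial>\<rho>n)
                  \<le> ennreal (real n * \<epsilon>n)"
    and cond_iii: "kl_div \<rho>n \<pi> \<le> ennreal (real n * \<epsilon>n)"
    and \<alpha>_range: "0 < \<alpha>" "\<alpha> < 1"
    and \<epsilon>_range: "0 < \<epsilon>" "\<epsilon> < 1"
    and \<eta>_range: "0 < \<eta>" "\<eta> < 1"
    and Q_var: "AE x in density \<mu> (p \<theta>0). Q x \<in> \<F> \<and>
                  (\<forall>\<rho>\<in>\<F>. kl_div (Q x) (frac_post \<pi> p \<theta>0 \<alpha> x) \<le> kl_div \<rho> (frac_post \<pi> p \<theta>0 \<alpha> x))"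
  shows "\<exists>A \<in> sets (density \<mu> (p \<theta>0)).
           measure (density \<mu> (p \<theta>0)) A \<ge> 1 - \<epsilon> - \<eta> \<and>
           (\<forall>x\<in>A. (\<integral>\<^sup>+ \<theta>. renyi_div \<mu> \<alpha> (p \<theta>) (p \<theta>0) \<partial>Q x)
              \<le> ennreal (((\<alpha> + 1) * real n * \<epsilon>n + \<alpha> * sqrt (real n * \<epsilon>n / \<eta>) - ln \<epsilon>) / (1 - \<alpha>)))"
proof -
  have space_\<pi>: "space \<pi> = \<Theta>"
    using sets_eq_imp_space_eq[OF \<pi>_sets] by (simp add: space_restrict_space)
  have "(\<lambda>(\<theta>, x). p \<theta> x) \<in> borel_measurable (\<pi> \<Otimes>\<^sub>M \<mu>)"
    using p_meas unfolding measurable_cong_sets[OF sets_pair_measure_cong[OF \<pi>_sets refl] refl] .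
  then interpret dominated_model \<mu> \<pi> p \<theta>0
    using \<mu>_sf \<pi>_prob p_nonneg p_dens \<theta>0_in
    by (intro dominated_model.intro dominated_model_axioms.intro) (simp_all add: space_\<pi>)
  have "0 < real n * \<epsilon>n" using n_pos \<epsilon>n_pos by simp
  from tempered_posterior_renyi_concentration[OF \<F>_def this \<rho>n_in cond_i_fin cond_i_int cond_i cond_ii
      cond_iii \<alpha>_range \<epsilon>_range(1) \<eta>_range(1) Q_var]
  show ?thesis by (simp add: mult.assoc)
qed

end
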